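(* Let $k\ge0$ and $n\ge 2k+2$, and fix reals $t_1<\dots<t_{n+1}$. Let $C_{2k+2}(n+1)=\mathrm{conv}\{\mu_{2k+2}(t_i): i\in[n+1]\}$ and $C_{2k+1}(n+1)=\mathrm{conv}\{\mu_{2k+1}(t_i): i\in[n+1]\}$, and identify faces of both polytopes with subsets of the index set $[n+1]$ of their vertices. If $F\subseteq[n+1]$ indexes a $k$-face of $C_{2k+2}(n+1)$ but $F$ does not index a $k$-face of $C_{2k+1}(n+1)$, then every facet of $C_{2k+2}(n+1)$ containing $F$ is a lower facet.
   Context: $\mu_d(t):=(t,t^2,\dots,t^d)^T\in\mathbb R^d$ is the moment curve. A facet of a full-dimensional polytope in $\mathbb R^d$ is an upper facet if its outer normal vector has positive last coordinate, and a lower facet if its outer normal vector has negative last coordinate (for cyclic polytopes on the moment curve every facet is one of the two). *)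

theory Defs
  imports "HOL-Analysis.Analysis"
begin

text \<open>Points of R^d are modelled as vectors of type real^'n with CARD('n) = d.
  The coordinates are ordered by a bijection e :: 'n => nat onto {1..d}:
  coordinate i carries the e i-th coordinate of the usual R^d.\<close>

definition moment :: "('n::finite \<Rightarrow> nat) \<Rightarrow> real \<Rightarrow> real^'n" where
  "moment e s = (\<chi> i. s ^ e i)"

definition conv_idx :: "('n::finite \<Rightarrow> nat) \<Rightarrow> (nat \<Rightarrow> real) \<Rightarrow> nat set \<Rightarrow> (real^'n) set" where
  "conv_idx e t I = convex hull ((\<lambda>i. moment e (t i)) ` I)"

definition cyclic_polytope :: "('n::finite \<Rightarrow> nat) \<Rightarrow> (nat \<Rightarrow> real) \<Rightarrow> nat \<Rightarrow> (real^'n) set" where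
  "cyclic_polytope e t N = conv_idx e t {1..N}"

definition indexes_face :: "('n::finite \<Rightarrow> nat) \<Rightarrow> (nat \<Rightarrow> real) \<Rightarrow> nat \<Rightarrow> nat set \<Rightarrow> int \<Rightarrow> bool" where
  "indexes_face e t N F j \<longleftrightarrow>
     F \<subseteq> {1..N} \<and> conv_idx e t F face_of cyclic_polytope e t N \<and> aff_dim (conv_idx e t F) = j"

definition outer_normal :: "(real^'n) set \<Rightarrow> (real^'n) set \<Rightarrow> real^'n \<Rightarrow> bool" where
  "outer_normal P G u \<longleftrightarrow> u \<noteq> 0 \<and> (\<exists>c. (\<forall>x\<in>P. inner u x \<le> c) \<and> (\<forall>y\<in>G. inner u y = c))"

definition lower_facet :: "('n::finite \<Rightarrow> nat) \<Rightarrow> (real^'n) set \<Rightarrow> (real^'n) set \<Rightarrow> bool" where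
  "lower_facet e P G \<longleftrightarrow> (\<exists>u. outer_normal P G u \<and> (\<forall>i. e i = CARD('n) \<longrightarrow> u $ i < 0))"

end

theory Submission imports Defs "HOL-Computational_Algebra.Polynomial"
begin

(* A linear functional u on R^D restricted to the moment curve is a polynomial
   of degree at most D without constant term, and the coefficient of s^D is the last
   coordinate of u.  Hence a facet G of the even cyclic polytope C_{2k+2}(n+1) with outer
   normal u yields a polynomial c * prod_{g in G} (s - t_g), with c the last coordinate of u,
   which is <= 0 at all parameters t_i.  Conversely a polynomial of degree <= D that is <= 0
   at all t_i and vanishes exactly at the t_i with i in F certifies that F is a face of C_D.
   If the facet were upper (c > 0), F would be a k-face of C_{2k+1}(n+1): if F contains an
   endpoint 1 or n+1, a certificate is a linear factor for each endpoint times squared linear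
   factors for the other points of F; otherwise n+1 lies in G, the certificate
   -prod_{g in G-{n+1}} (s - t_g) shows that the simplex G-{n+1} is a face of C_{2k+1},
   and F is a face of that simplex. *)

section \<open>Linear functionals on the moment curve are polynomials\<close>

lemma moment_functional_of_poly:
  fixes e :: "'n::finite \<Rightarrow> nat" and q :: "real poly"
  assumes "bij_betw e UNIV {1..D}" "degree q \<le> D"
  shows "\<exists>u. \<forall>s. inner u (moment e s) = poly q s - coeff q 0"
proof (intro exI allI)
  fix s :: real
  have "inner (\<chi> i. coeff q (e i)) (moment e s) = (\<Sum>i\<in>UNIV. coeff q (e i) * s ^ e i)"
    by (simp add: inner_vec_def moment_def)
  also have "\<dots> = (\<Sum>j\<in>{1..D}. coeff q j * s^j)"
    using sum.reindex_bij_betw[OF assms(1), of "\<lambda>j. coeff q j * s^j"] by simp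
  also have "\<dots> = (\<Sum>j\<le>D. coeff q j * s^j) - coeff q 0"
    by (simp add: atMost_atLeast0 sum.atLeast_Suc_atMost)
  also have "(\<Sum>j\<le>D. coeff q j * s^j) = poly q s"
    by (simp add: poly_altdef assms(2) sum.mono_neutral_right[of "{..D}" "{..degree q}"]
        coeff_eq_0 mult.commute)
  finally show "inner (\<chi> i. coeff q (e i)) (moment e s) = poly q s - coeff q 0" .
qed

lemma poly_of_moment_functional:
  fixes e :: "'n::finite \<Rightarrow> nat" and u :: "real^'n"
  assumes "bij_betw e UNIV {1..D}"
  shows "\<exists>p. degree p \<le> D \<and> (\<forall>s. poly p s = inner u (moment e s) - c)
             \<and> (\<forall>i. coeff p (e i) = u $ i)"
proof -
  define p where "p = (\<Sum>i\<in>UNIV. monom (u$i) (e i)) - [:c:]"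
  have eD: "e i \<in> {1..D}" for i using assms by (auto simp: bij_betw_def)
  have inj: "inj e" using assms by (auto simp: bij_betw_def)
  have "degree (monom (u$i) (e i)) \<le> D" for i
    using eD[of i] degree_monom_le[of "u$i" "e i"] by simp
  then have "degree (\<Sum>i\<in>UNIV. monom (u$i) (e i)) \<le> D" by (intro degree_sum_le) auto
  then have "degree p \<le> D" unfolding p_def by (rule degree_diff_le) simp
  moreover have "poly p s = inner u (moment e s) - c" for s
    unfolding p_def by (simp add: poly_sum poly_monom inner_vec_def moment_def algebra_simps)
  moreover have "coeff p (e i) = u $ i" for i
  proof -
    have "coeff [:c:] (e i) = 0" using eD[of i] by (cases "e i") (auto simp: coeff_pCons)
    moreover have "(\<Sum>j\<in>UNIV. coeff (monom (u$j) (e j)) (e i)) = (\<Sum>j\<in>UNIV. if j = i then u$j else 0)"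
      using inj by (intro sum.cong) (auto simp: inj_eq)
    ultimately show ?thesis by (simp add: coeff_sum p_def)
  qed
  ultimately show ?thesis by blast
qed

section \<open>Affine independence of points on the moment curve\<close>

text \<open>The first coordinate of the moment curve is the parameter itself (D \<ge> 1 is forced by
  the bijection, since every type is nonempty), so the curve is injective.\<close>
lemma moment_inj_on:
  fixes e :: "'n::finite \<Rightarrow> nat"
  assumes "bij_betw e UNIV {1..D}" "inj_on t I"
  shows "inj_on (\<lambda>i. moment e (t i)) I"
proof (rule inj_onI)
  fix x y assume xy: "x \<in> I" "y \<in> I" "moment e (t x) = moment e (t y)"
  have range: "range e = {1..D}" using assms(1) by (simp add: bij_betw_def)
  then have "1 \<le> e v" "e v \<le> D" for v by auto
  then have "1 \<in> range e" using range by (metis atLeastAtMost_iff le_trans order_refl)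
  then obtain i where "e i = 1" by (metis rangeE)
  then have "t x = t y" using arg_cong[OF xy(3), of "\<lambda>v. v $ i"] by (simp add: moment_def)
  then show "x = y" using assms(2) xy by (meson inj_onD)
qed

text \<open>At most D+1 distinct points of the moment curve in R^D are affinely independent:
  a point in the affine hull of the others would be a root of the polynomial vanishing
  exactly at the others.\<close>
lemma moment_affine_independent:
  fixes e :: "'n::finite \<Rightarrow> nat"
  assumes "bij_betw e UNIV {1..D}" "finite I" "inj_on t I" "card I \<le> D + 1"
  shows "\<not> affine_dependent ((\<lambda>i. moment e (t i)) ` I)"
proof
  let ?m = "\<lambda>i. moment e (t i)"
  assume "affine_dependent (?m ` I)"
  then obtain j where j: "j \<in> I" "?m j \<in> affine hull (?m ` I - {?m j})"
    unfolding affine_dependent_def by blast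
  have others: "?m ` I - {?m j} = ?m ` (I - {j})"
    using inj_on_image_set_diff[OF moment_inj_on[OF assms(1,3)], of I "{j}"] j(1) by simp
  define q where "q = (\<Prod>i\<in>I-{j}. [:-t i, 1:])"
  have pq: "poly q s = (\<Prod>i\<in>I-{j}. s - t i)" for s by (simp add: q_def poly_prod)
  have "degree q \<le> card (I - {j})"
    unfolding q_def using degree_prod_sum_le[of "I-{j}" "\<lambda>i. [:-t i, 1:]"] assms(2) by (simp add: o_def)
  also have "\<dots> \<le> D" using assms(2,4) j(1) by simp
  finally obtain u where u: "\<forall>s. inner u (moment e s) = poly q s - coeff q 0"
    using moment_functional_of_poly[OF assms(1)] by blast
  have "?m ` (I - {j}) \<subseteq> {x. inner u x = - coeff q 0}"
    using u pq assms(2) by auto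
  then have "affine hull (?m ` (I - {j})) \<subseteq> {x. inner u x = - coeff q 0}"
    by (intro hull_minimal) (auto simp: affine_hyperplane)
  then have "?m j \<in> {x. inner u x = - coeff q 0}" using j(2) unfolding others by blast
  then have "poly q (t j) = 0" using u by simp
  moreover have "(\<Prod>i\<in>I-{j}. t j - t i) \<noteq> 0"
    using assms(2,3) j(1) by (auto simp: inj_on_def)
  ultimately show False using pq by simp
qed

lemma aff_dim_conv_idx:
  fixes e :: "'n::finite \<Rightarrow> nat"
  assumes "bij_betw e UNIV {1..D}" "finite I" "inj_on t I" "card I \<le> D + 1"
  shows "aff_dim (conv_idx e t I) = int (card I) - 1"
  using aff_dim_affine_independent[OF moment_affine_independent[OF assms]]
    card_image[OF moment_inj_on[OF assms(1,3)]]
  by (simp add: conv_idx_def aff_dim_convex_hull)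

text \<open>Any D+1 of the points span R^D, so the cyclic polytope is full-dimensional.\<close>
lemma aff_dim_cyclic_polytope:
  fixes e :: "'n::finite \<Rightarrow> nat"
  assumes "bij_betw e UNIV {1..D}" "D + 1 \<le> N" "inj_on t {1..N}"
  shows "aff_dim (cyclic_polytope e t N) = int D"
proof (rule antisym)
  have "aff_dim (cyclic_polytope e t N) \<le> int DIM(real^'n)" by (rule aff_dim_le_DIM)
  then show "aff_dim (cyclic_polytope e t N) \<le> int D"
    using bij_betw_same_card[OF assms(1)] by simp
  have sub: "{1..D+1} \<subseteq> {1..N}" using assms(2) by auto
  have "aff_dim (conv_idx e t {1..D+1}) = int D"
    using aff_dim_conv_idx[OF assms(1) _ inj_on_subset[OF assms(3) sub]] by simp
  moreover have "conv_idx e t {1..D+1} \<subseteq> cyclic_polytope e t N"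
    unfolding cyclic_polytope_def conv_idx_def using sub by (intro hull_mono image_mono)
  ultimately show "int D \<le> aff_dim (cyclic_polytope e t N)" by (metis aff_dim_subset)
qed

section \<open>Polynomial certificates for faces\<close>

lemma face_of_cyclic_polytope_hyperplane:
  fixes e :: "'n::finite \<Rightarrow> nat"
  assumes "F \<subseteq> {1..N}" "\<forall>i\<in>{1..N}. inner u (moment e (t i)) \<le> c"
    "\<forall>i\<in>{1..N}. inner u (moment e (t i)) = c \<longleftrightarrow> i \<in> F"
  shows "conv_idx e t F face_of cyclic_polytope e t N"
proof -
  let ?m = "\<lambda>i. moment e (t i)"
  let ?S = "?m ` {1..N}"
  let ?H = "{x. inner u x = c}"
  have "convex hull ?S \<subseteq> {x. inner u x \<le> c}"
    using assms(2) by (intro hull_minimal) (auto simp: convex_halfspace_le)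
  then have face: "(convex hull ?S \<inter> ?H) face_of convex hull ?S"
    by (intro face_of_Int_supporting_hyperplane_le) auto
  then obtain S' where S': "S' \<subseteq> ?S" "convex hull ?S \<inter> ?H = convex hull S'"
    using face_of_convex_hull_subset[OF finite_imp_compact] by (metis finite_imageI finite_atLeastAtMost)
  have "S' \<subseteq> ?m ` F"
  proof
    fix y assume y: "y \<in> S'"
    then obtain i where i: "i \<in> {1..N}" "y = ?m i" using S'(1) by blast
    have "inner u y = c" using y S'(2) hull_subset[of S' convex] by blast
    then show "y \<in> ?m ` F" using i assms(3) by blast
  qed
  then have "convex hull ?S \<inter> ?H \<subseteq> convex hull (?m ` F)" using S'(2) by (simp add: hull_mono)
  moreover have "convex hull (?m ` F) \<subseteq> convex hull ?S" using assms(1) by (intro hull_mono) auto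
  moreover have "convex hull (?m ` F) \<subseteq> ?H"
    using assms(1,3) by (intro hull_minimal) (auto simp: convex_hyperplane)
  ultimately have eq: "convex hull ?S \<inter> ?H = convex hull (?m ` F)" by blast
  show ?thesis unfolding conv_idx_def cyclic_polytope_def using face[unfolded eq] .
qed

lemma face_of_cyclic_polytope_poly:
  fixes e :: "'n::finite \<Rightarrow> nat" and q :: "real poly"
  assumes "bij_betw e UNIV {1..D}" "degree q \<le> D" "F \<subseteq> {1..N}"
    "\<forall>i\<in>{1..N}. poly q (t i) \<le> 0" "\<forall>i\<in>{1..N}. poly q (t i) = 0 \<longleftrightarrow> i \<in> F"
  shows "conv_idx e t F face_of cyclic_polytope e t N"
proof -
  obtain u where u: "\<forall>s. inner u (moment e s) = poly q s - coeff q 0"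
    using moment_functional_of_poly[OF assms(1,2)] by blast
  show ?thesis
  proof (rule face_of_cyclic_polytope_hyperplane[OF assms(3), where u = u and c = "- coeff q 0"])
    show "\<forall>i\<in>{1..N}. inner u (moment e (t i)) \<le> - coeff q 0" using u assms(4) by simp
    show "\<forall>i\<in>{1..N}. inner u (moment e (t i)) = - coeff q 0 \<longleftrightarrow> i \<in> F"
      using u assms(5) by simp
  qed
qed

text \<open>A subset of at most D+1 vertices spans a simplex, all of whose faces are spanned by
  subsets; so subsets of such a face are faces again.\<close>
lemma face_of_simplex_face:
  fixes e :: "'n::finite \<Rightarrow> nat"
  assumes "bij_betw e UNIV {1..D}" "finite G" "inj_on t G" "card G \<le> D + 1" "F \<subseteq> G"
    "conv_idx e t G face_of P"
  shows "conv_idx e t F face_of P"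
proof -
  let ?m = "\<lambda>i. moment e (t i)"
  have "\<exists>c\<subseteq>?m ` G. convex hull (?m ` F) = convex hull c"
    using image_mono[OF assms(5), of ?m] by blast
  then have "convex hull (?m ` F) face_of convex hull (?m ` G)"
    by (simp only: face_of_convex_hull_affine_independent[OF moment_affine_independent[OF assms(1-4)]])
  then have "conv_idx e t F face_of conv_idx e t G" by (simp only: conv_idx_def)
  then show ?thesis using assms(6) by (rule face_of_trans)
qed

section \<open>Facets and their root polynomials\<close>

lemma proper_face_outer_normal:
  fixes P :: "(real^'n) set"
  assumes "polyhedron P" "G face_of P" "G \<noteq> {}" "G \<noteq> P"
  shows "\<exists>u. outer_normal P G u"
proof -
  obtain u c where uc: "P \<subseteq> {x. u \<bullet> x \<le> c}" "G = P \<inter> {x. u \<bullet> x = c}"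
    using assms(2) exposed_face_of_polyhedron[OF assms(1)] unfolding exposed_face_of_def by blast
  have "u \<noteq> 0"
  proof
    assume "u = 0"
    then have "G = P \<or> G = {}" using uc(2) by (cases "c = 0") auto
    then show False using assms(3,4) by blast
  qed
  then show ?thesis using uc unfolding outer_normal_def by blast
qed

lemma poly_eq_coeff_prod_roots:
  fixes p :: "real poly"
  assumes "degree p \<le> D" "finite R" "card R = D" "\<forall>r\<in>R. poly p r = 0"
  shows "poly p s = coeff p D * (\<Prod>r\<in>R. s - r)"
proof -
  define r0 where "r0 = (\<Prod>r\<in>R. [:-r, 1:])"
  have pr0: "poly r0 s = (\<Prod>r\<in>R. s - r)" for s by (simp add: r0_def poly_prod)
  have dr0: "degree r0 = D" unfolding r0_def
    by (subst degree_prod_eq_sum_degree) (use assms(3) in auto)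
  have lr0: "coeff r0 D = 1"
    using lead_coeff_prod[of "\<lambda>r. [:-r, 1:]" R] dr0 by (simp add: r0_def)
  define h where "h = p - smult (coeff p D) r0"
  have "degree (smult (coeff p D) r0) \<le> D" using degree_smult_le[of "coeff p D" r0] dr0 by simp
  then have "degree h \<le> D" unfolding h_def using assms(1) by (intro degree_diff_le)
  moreover have "coeff h D = 0" using lr0 by (simp add: h_def)
  ultimately have small: "h \<noteq> 0 \<Longrightarrow> degree h < D" by (metis le_neq_implies_less leading_coeff_0_iff)
  have "h = 0"
  proof (rule ccontr)
    assume h0: "h \<noteq> 0"
    have "R \<subseteq> {x. poly h x = 0}" using assms(2,4) pr0 by (auto simp: h_def)
    then have "card R \<le> card {x. poly h x = 0}" using poly_roots_finite[OF h0] by (rule card_mono[rotated])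
    also have "\<dots> \<le> degree h" by (rule card_poly_roots_bound[OF h0])
    finally show False using small[OF h0] assms(3) by simp
  qed
  then have "p = smult (coeff p D) r0" by (simp add: h_def)
  then show ?thesis by (metis poly_smult pr0)
qed

lemma outer_normal_root_polynomial:
  fixes e :: "'n::finite \<Rightarrow> nat"
  assumes bij: "bij_betw e UNIV {1..D}" and last: "e j = D" and injt: "inj_on t {1..N}"
    and GV: "G \<subseteq> {1..N}" and cardG: "D \<le> card G"
    and normal: "outer_normal (cyclic_polytope e t N) (conv_idx e t G) u"
  shows "card G = D \<and> u $ j \<noteq> 0 \<and> (\<forall>i\<in>{1..N}. u $ j * (\<Prod>g\<in>G. t i - t g) \<le> 0)"
proof -
  obtain c where u0: "u \<noteq> 0" and below: "\<forall>x\<in>cyclic_polytope e t N. u \<bullet> x \<le> c"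
    and on: "\<forall>y\<in>conv_idx e t G. u \<bullet> y = c"
    using normal unfolding outer_normal_def by blast
  obtain p where p: "degree p \<le> D" "\<forall>s. poly p s = u \<bullet> moment e s - c" "\<forall>i. coeff p (e i) = u $ i"
    using poly_of_moment_functional[OF bij] by blast
  have p0: "p \<noteq> 0"
  proof
    assume "p = 0"
    then have "u $ i = 0" for i using p(3) by (metis coeff_0)
    then show False using u0 by (simp add: vec_eq_iff)
  qed
  have root: "poly p (t g) = 0" if "g \<in> G" for g
    using on p(2) that hull_inc[of "moment e (t g)"] by (simp add: conv_idx_def)
  have nonpos: "poly p (t i) \<le> 0" if "i \<in> {1..N}" for i
    using below p(2) that hull_inc[of "moment e (t i)"] by (simp add: cyclic_polytope_def conv_idx_def)
  have finG: "finite G" using GV finite_subset by blast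
  have injG: "inj_on t G" using inj_on_subset[OF injt GV] .
  have "card G = card (t ` G)" using card_image[OF injG] by simp
  also have "\<dots> \<le> card {x. poly p x = 0}"
    using root by (intro card_mono[OF poly_roots_finite[OF p0]]) auto
  also have "\<dots> \<le> D" using card_poly_roots_bound[OF p0] p(1) by simp
  finally have card_eq: "card G = D" using cardG by simp
  have factor: "poly p s = u $ j * (\<Prod>g\<in>G. s - t g)" for s
  proof -
    have "poly p s = coeff p D * (\<Prod>r\<in>t ` G. s - r)"
      by (rule poly_eq_coeff_prod_roots[OF p(1)]) (use finG card_image[OF injG] card_eq root in auto)
    moreover have "coeff p D = u $ j" using p(3) last by metis
    ultimately show ?thesis using prod.reindex[OF injG, of "\<lambda>r. s - r"] by simp
  qed
  have "u $ j \<noteq> 0"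
  proof
    assume "u $ j = 0"
    then have "poly p s = 0" for s using factor by simp
    then show False using p0 poly_all_0_iff_0 by blast
  qed
  then show ?thesis using card_eq factor nonpos by simp
qed

lemma facet_root_polynomial:
  fixes e :: "'n::finite \<Rightarrow> nat"
  assumes bij: "bij_betw e UNIV {1..D}" and last: "e j = D" and N: "D + 1 \<le> N"
    and injt: "inj_on t {1..N}" and facet: "indexes_face e t N G (int D - 1)"
  shows "\<exists>u. outer_normal (cyclic_polytope e t N) (conv_idx e t G) u \<and> card G = D \<and> u $ j \<noteq> 0
           \<and> (\<forall>i\<in>{1..N}. u $ j * (\<Prod>g\<in>G. t i - t g) \<le> 0)"
proof -
  let ?P = "cyclic_polytope e t N"
  have GV: "G \<subseteq> {1..N}" and face: "conv_idx e t G face_of ?P"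
    and dim: "aff_dim (conv_idx e t G) = int D - 1" using facet by (auto simp: indexes_face_def)
  have "e j \<in> {1..D}" using bij by (auto simp: bij_betw_def)
  then have "1 \<le> D" using last by simp
  moreover have "aff_dim ?P = int D" using aff_dim_cyclic_polytope[OF bij N injt] .
  ultimately have "conv_idx e t G \<noteq> {}" "conv_idx e t G \<noteq> ?P" using dim by auto
  moreover have "polyhedron ?P" unfolding cyclic_polytope_def conv_idx_def
    by (intro polytope_imp_polyhedron polytope_convex_hull) simp
  ultimately obtain u where u: "outer_normal ?P (conv_idx e t G) u"
    using proper_face_outer_normal face by blast
  have finG: "finite G" using GV finite_subset by blast
  have "aff_dim (conv_idx e t G) \<le> int (card ((\<lambda>i. moment e (t i)) ` G)) - 1"
    using aff_dim_le_card[of "(\<lambda>i. moment e (t i)) ` G"] finG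
    by (simp add: conv_idx_def aff_dim_convex_hull)
  also have "\<dots> \<le> int (card G) - 1" using card_image_le[OF finG, of "\<lambda>i. moment e (t i)"] by simp
  finally have "aff_dim (conv_idx e t G) \<le> int (card G) - 1" .
  then have "D \<le> card G" using dim by simp
  then show ?thesis using outer_normal_root_polynomial[OF bij last injt GV _ u] u by blast
qed

section \<open>Faces of the odd cyclic polytope\<close>

text \<open>In odd dimension 2m+1, at most m+1 vertices containing an endpoint 1 or N always span
  a face: the certificate is a linear factor, nonnegative on the parameters, for each
  endpoint in F, times a squared linear factor for every other point of F.\<close>
lemma face_of_odd_cyclic_polytope_endpoint:
  fixes e :: "'n::finite \<Rightarrow> nat"
  assumes bij: "bij_betw e UNIV {1..2*m+1}" and mono: "strict_mono_on {1..N} t"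
    and FV: "F \<subseteq> {1..N}" and cardF: "card F \<le> m + 1" and endpoint: "1 \<in> F \<or> N \<in> F"
  shows "conv_idx e t F face_of cyclic_polytope e t N"
proof -
  define E where "E = F \<inter> {1, N}"
  define F0 where "F0 = F - {1, N}"
  define lin :: "nat \<Rightarrow> real poly" where "lin f = (if f = 1 then [:- t 1, 1:] else [:t N, -1:])" for f
  define q where "q = - (prod lin E * (\<Prod>f\<in>F0. [:- t f, 1:]^2))"
  have finF: "finite F" using FV finite_subset by blast
  have finE: "finite E" and finF0: "finite F0" using finF by (simp_all add: E_def F0_def)
  have injt: "inj_on t {1..N}" using mono by (rule strict_mono_on_imp_inj_on)
  have "E \<noteq> {}" using endpoint by (auto simp: E_def)
  then have "1 \<le> card E" using finE by (simp add: Suc_le_eq card_gt_0_iff)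
  moreover have "card F = card E + card F0"
    unfolding E_def F0_def using finF by (metis Diff_eq card_Int_Diff inf_commute)
  moreover have "degree (prod lin E) \<le> card E"
    using degree_prod_sum_le[OF finE, of lin] sum_mono[of E "degree \<circ> lin" "\<lambda>_. 1"]
    by (fastforce simp: lin_def)
  moreover have "degree (\<Prod>f\<in>F0. [:- t f, 1:]^2) \<le> 2 * card F0"
    using degree_prod_sum_le[OF finF0, of "\<lambda>f. [:- t f, 1:]^2"]
      sum_mono[of F0 "\<lambda>f. degree ([:- t f, 1:]^2)" "\<lambda>_. 2"] degree_power_le[of "[:- t _, 1:]" 2]
    by (fastforce simp: o_def)
  ultimately have deg: "degree q \<le> 2*m+1"
    using cardF degree_mult_le[of "prod lin E" "\<Prod>f\<in>F0. [:- t f, 1:]^2"]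
    unfolding q_def degree_minus by linarith
  have lin: "0 \<le> poly (lin f) (t i) \<and> (poly (lin f) (t i) = 0 \<longleftrightarrow> i = f)"
    if i: "i \<in> {1..N}" and f: "f \<in> E" for i f
  proof -
    have "f = 1 \<or> f = N" "f \<in> {1..N}" using f FV by (auto simp: E_def)
    moreover have "t 1 \<le> t i" "t i \<le> t N" using strict_mono_on_leD[OF mono] i by auto
    moreover have "t i = t f \<longleftrightarrow> i = f" using injt i \<open>f \<in> {1..N}\<close> by (auto dest: inj_onD)
    ultimately show ?thesis by (auto simp: lin_def)
  qed
  have poly_q: "poly q (t i) = - ((\<Prod>f\<in>E. poly (lin f) (t i)) * (\<Prod>f\<in>F0. (t i - t f)^2))" for i
    by (simp add: q_def poly_prod)
  show ?thesis
  proof (rule face_of_cyclic_polytope_poly[OF bij deg FV])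
    show "\<forall>i\<in>{1..N}. poly q (t i) \<le> 0"
      using lin by (auto simp: poly_q intro!: mult_nonneg_nonneg prod_nonneg)
    have "t i = t f \<longleftrightarrow> i = f" if "i \<in> {1..N}" "f \<in> F0" for i f
      using injt that FV by (auto simp: F0_def dest: inj_onD)
    then show "\<forall>i\<in>{1..N}. poly q (t i) = 0 \<longleftrightarrow> i \<in> F"
      using lin finE finF0 by (auto simp: poly_q E_def F0_def)
  qed
qed

text \<open>If \<Prod>(t_i - t_g) \<le> 0 at all parameters (the sign pattern of an upper facet in even
  dimension), then the last vertex N lies in G, and dropping it leaves a face of the cyclic
  polytope one dimension lower, certified by -\<Prod>_{g \<in> G-{N}} (s - t_g).\<close>
lemma face_of_upper_facet_without_last:
  fixes e :: "'n::finite \<Rightarrow> nat"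
  assumes bij: "bij_betw e UNIV {1..D}" and mono: "strict_mono_on {1..N} t"
    and GV: "G \<subseteq> {1..N}" and G0: "G \<noteq> {}" and cardG: "card G \<le> D + 1"
    and sign: "\<forall>i\<in>{1..N}. (\<Prod>g\<in>G. t i - t g) \<le> 0"
  shows "N \<in> G \<and> conv_idx e t (G - {N}) face_of cyclic_polytope e t N"
proof -
  have finG: "finite G" using GV finite_subset by blast
  have injt: "inj_on t {1..N}" using mono by (rule strict_mono_on_imp_inj_on)
  have NV: "N \<in> {1..N}" using G0 GV by auto
  have below: "t i < t N" if "i \<in> {1..N}" "i \<noteq> N" for i
    using strict_mono_onD[OF mono] that NV by simp
  have NG: "N \<in> G"
  proof (rule ccontr)
    assume nN: "N \<notin> G"
    have "t g < t N" if "g \<in> G" for g using below[of g] that nN GV by blast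
    then have "0 < (\<Prod>g\<in>G. t N - t g)" by (intro prod_pos) simp
    then show False using sign NV by fastforce
  qed
  define G' where "G' = G - {N}"
  define r where "r = - (\<Prod>g\<in>G'. [:- t g, 1:])"
  have poly_r: "poly r s = - (\<Prod>g\<in>G'. s - t g)" for s by (simp add: r_def poly_prod)
  have "degree r \<le> card G'"
    using degree_prod_sum_le[of G' "\<lambda>g. [:- t g, 1:]"] finG by (simp add: r_def G'_def o_def)
  then have deg: "degree r \<le> D" using cardG NG finG by (simp add: G'_def)
  have pos: "0 < (\<Prod>g\<in>G'. t i - t g)" if i: "i \<in> {1..N}" "i \<notin> G'" for i
  proof (cases "i = N")
    case True
    have "t g < t N" if "g \<in> G'" for g using below[of g] that GV by (auto simp: G'_def)
    then show ?thesis using True by (intro prod_pos) simp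
  next
    case False
    have "(\<Prod>g\<in>G'. t i - t g) \<noteq> 0"
      using injt i GV finG by (auto simp: G'_def dest: inj_onD)
    moreover have "(t i - t N) * (\<Prod>g\<in>G'. t i - t g) \<le> 0"
      using bspec[OF sign i(1)] prod.remove[OF finG NG, of "\<lambda>g. t i - t g"] by (simp add: G'_def)
    ultimately show ?thesis using below[OF i(1) False] by (simp add: mult_le_0_iff)
  qed
  have zero: "(\<Prod>g\<in>G'. t i - t g) = 0" if "i \<in> G'" for i
    using that finG by (auto simp: G'_def intro: prod_zero)
  have "conv_idx e t G' face_of cyclic_polytope e t N"
  proof (rule face_of_cyclic_polytope_poly[OF bij deg])
    show "G' \<subseteq> {1..N}" using GV by (auto simp: G'_def)
    show "\<forall>i\<in>{1..N}. poly r (t i) \<le> 0" using pos zero poly_r by (metis neg_le_0_iff_le order.order_iff_strict)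
    show "\<forall>i\<in>{1..N}. poly r (t i) = 0 \<longleftrightarrow> i \<in> G'" using pos zero poly_r by fastforce
  qed
  then show ?thesis using NG by (simp add: G'_def)
qed

text \<open>Consequently, a (k+1)-subset of a 2k+2-set with the upper sign pattern spans a k-face of
  the cyclic polytope in R^(2k+1): either F contains an endpoint, or F lies in the simplex
  face G-{N}.\<close>
lemma face_of_odd_cyclic_polytope:
  fixes e :: "'n::finite \<Rightarrow> nat"
  assumes bij: "bij_betw e UNIV {1..2*k+1}" and mono: "strict_mono_on {1..N} t"
    and GV: "G \<subseteq> {1..N}" and cardG: "card G = 2*k+2"
    and sign: "\<forall>i\<in>{1..N}. (\<Prod>g\<in>G. t i - t g) \<le> 0"
    and FG: "F \<subseteq> G" and cardF: "card F = k+1"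
  shows "indexes_face e t N F (int k)"
proof -
  have injt: "inj_on t {1..N}" using mono by (rule strict_mono_on_imp_inj_on)
  have finG: "finite G" using GV finite_subset by blast
  have FV: "F \<subseteq> {1..N}" using FG GV by blast
  have "conv_idx e t F face_of cyclic_polytope e t N"
  proof (cases "1 \<in> F \<or> N \<in> F")
    case True
    then show ?thesis using face_of_odd_cyclic_polytope_endpoint[OF bij mono FV] cardF by simp
  next
    case False
    have "G \<noteq> {}" using cardG by auto
    then have face: "conv_idx e t (G - {N}) face_of cyclic_polytope e t N"
      using face_of_upper_facet_without_last[OF bij mono GV _ _ sign] cardG by simp
    have sub: "F \<subseteq> G - {N}" using FG False by blast
    have inj: "inj_on t (G - {N})" using inj_on_subset[OF injt] GV by blast
    have "card (G - {N}) \<le> 2*k+1 + 1" using card_Diff1_le[of G N] cardG by simp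
    then show ?thesis using face_of_simplex_face[OF bij _ inj _ sub face] finG by simp
  qed
  moreover have "aff_dim (conv_idx e t F) = int k"
    using aff_dim_conv_idx[OF bij _ inj_on_subset[OF injt FV]] finite_subset[OF FG finG] cardF
    by simp
  ultimately show ?thesis using FV by (simp add: indexes_face_def)
qed

theorem lemma2p4:
  fixes k n :: nat and t :: "nat \<Rightarrow> real" and F :: "nat set"
    and e :: "'n::finite \<Rightarrow> nat" and e' :: "'m::finite \<Rightarrow> nat"
  assumes "bij_betw e UNIV {1..2*k+2}"
    and "bij_betw e' UNIV {1..2*k+1}"
    and "n \<ge> 2*k+2"
    and "strict_mono_on {1..n+1} t"
    and "indexes_face e t (n+1) F (int k)"
    and "\<not> indexes_face e' t (n+1) F (int k)"
  shows "\<forall>G. indexes_face e t (n+1) G (int (2*k+1)) \<and> F \<subseteq> G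
           \<longrightarrow> lower_facet e (cyclic_polytope e t (n+1)) (conv_idx e t G)"
proof (intro allI impI)
  fix G assume G: "indexes_face e t (n+1) G (int (2*k+1)) \<and> F \<subseteq> G"
  have injt: "inj_on t {1..n+1}" using assms(4) by (rule strict_mono_on_imp_inj_on)
  have "2*k+2 \<in> range e" using assms(1) by (simp add: bij_betw_def)
  then obtain j where j: "e j = 2*k+2" by (metis rangeE)
  have "indexes_face e t (n+1) G (int (2*k+2) - 1)" using G by simp
  then obtain u where u: "outer_normal (cyclic_polytope e t (n+1)) (conv_idx e t G) u"
    and cardG: "card G = 2*k+2" and "u $ j \<noteq> 0"
    and sign: "\<forall>i\<in>{1..n+1}. u $ j * (\<Prod>g\<in>G. t i - t g) \<le> 0"
    using facet_root_polynomial[OF assms(1) j _ injt] assms(3) by auto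
  have GV: "G \<subseteq> {1..n+1}" and FG: "F \<subseteq> G" using G by (auto simp: indexes_face_def)
  have finG: "finite G" using GV finite_subset by blast
  have "card F \<le> 2*k+2 + 1" using card_mono[OF finG FG] cardG by simp
  then have "aff_dim (conv_idx e t F) = int (card F) - 1"
    using aff_dim_conv_idx[OF assms(1) finite_subset[OF FG finG]] inj_on_subset[OF injt] FG GV
    by blast
  then have "card F = k + 1" using assms(5) by (simp add: indexes_face_def)
  have "u $ j < 0"
  proof (rule ccontr)
    assume "\<not> u $ j < 0"
    then have "\<forall>i\<in>{1..n+1}. (\<Prod>g\<in>G. t i - t g) \<le> 0"
      using sign \<open>u $ j \<noteq> 0\<close> by (simp add: mult_le_0_iff)
    then have "indexes_face e' t (n+1) F (int k)"
      using face_of_odd_cyclic_polytope[OF assms(2,4) GV cardG _ FG \<open>card F = k + 1\<close>] by blast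
    then show False using assms(6) by contradiction
  qed
  moreover have "i = j" if "e i = CARD('n)" for i
  proof -
    have "e i = e j" using that j bij_betw_same_card[OF assms(1)] by simp
    then show ?thesis using bij_betw_imp_inj_on[OF assms(1)] by (simp add: inj_eq)
  qed
  ultimately show "lower_facet e (cyclic_polytope e t (n+1)) (conv_idx e t G)"
    using u unfolding lower_facet_def by (intro exI[of _ u]) auto
qed

end
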